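(* Let $d\in\{1,2,3,7,11\}$, $K=\mathbb{Q}(\sqrt{-d})$, $\mathcal{O}_d$ its ring of integers, $\Delta$ a positive integer not of the form $\beta\bar\beta$ with $\beta\in\mathcal{O}_d$, and $k\ge1$ odd. Let $$H_{k,\Delta}(z)=\sum_{\substack{(a,b,c)\in\mathbb{Z}\times\mathcal{O}_d\times\mathbb{Z}\\ b\bar b-ac=\Delta,\ a<0}}\max\left(0,\left(a|z|^2+bz+\bar b\bar z+c\right)^k\right).$$ Then for all $z\in\mathbb{C}$: (1) $H_{k,\Delta}(\bar z)=H_{k,\Delta}(z)$; (2) $H_{k,\Delta}(uz)=H_{k,\Delta}(z)$ for every unit $u\in\mathcal{O}_d^\times$; (3) $H_{k,\Delta}(z+\lambda)=H_{k,\Delta}(z)$ for every $\lambda\in\mathcal{O}_d$. *)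

theory Defs
  imports "HOL-Analysis.Analysis"
begin

text \<open>Integral basis generator of the ring of integers of Q(sqrt(-d)) for squarefree d > 0:
  sqrt(-d) if d is not 3 mod 4, and (1 + sqrt(-d))/2 if d = 3 mod 4.\<close>
definition omega_d :: "nat \<Rightarrow> complex" where
  "omega_d d = (if d mod 4 = 3 then (1 + \<i> * complex_of_real (sqrt (real d))) / 2
                else \<i> * complex_of_real (sqrt (real d)))"

definition O_d :: "nat \<Rightarrow> complex set" where
  "O_d d = {of_int m + of_int n * omega_d d | m n :: int. True}"

definition units_O_d :: "nat \<Rightarrow> complex set" where
  "units_O_d d = {u \<in> O_d d. \<exists>v \<in> O_d d. u * v = 1}"

definition H_index :: "nat \<Rightarrow> int \<Rightarrow> (int \<times> complex \<times> int) set" where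
  "H_index d \<Delta> = {(a, b, c). b \<in> O_d d \<and> b * cnj b - of_int (a * c) = of_int \<Delta> \<and> a < 0}"

text \<open>The summand max(0, (a|z|^2 + b z + bbar zbar + c)^k); the inner expression is real.\<close>
definition H_term :: "nat \<Rightarrow> complex \<Rightarrow> int \<times> complex \<times> int \<Rightarrow> real" where
  "H_term k z t = (case t of (a, b, c) \<Rightarrow>
     max 0 ((Re (of_int a * complex_of_real ((cmod z)\<^sup>2) + b * z + cnj b * cnj z + of_int c)) ^ k))"

definition H :: "nat \<Rightarrow> nat \<Rightarrow> int \<Rightarrow> complex \<Rightarrow> real" where
  "H d k \<Delta> z = (\<Sum>\<^sub>\<infinity> t \<in> H_index d \<Delta>. H_term k z t)"

end

theory Submission
  imports Defs
begin

text \<open>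
  Identify a triple t = (a, b, c) with the Hermitian form a |z|^2 + b z + bbar zbar + c.
  Complex conjugation, multiplication by a unit u and translation by l \<in> O_d act on such forms
  by substitution, and each substitution is again a form with a \<in> \<int>, b \<in> O_d, c \<in> \<int>, the same
  leading coefficient a and the same discriminant b bbar - a c. Hence each substitution permutes
  the index set of H, and H is invariant by reindexing the sum.
\<close>

lemma omega_d_trace_Ints: "omega_d d + cnj (omega_d d) \<in> \<int>"
proof (cases "d mod 4 = 3")
  case True
  then have "omega_d d + cnj (omega_d d) = 1" by (simp add: omega_d_def complex_eq_iff)
  then show ?thesis by simp
next
  case False
  then have "omega_d d + cnj (omega_d d) = 0" by (simp add: omega_d_def complex_eq_iff)
  then show ?thesis by simp
qed

lemma omega_d_norm_Ints: "omega_d d * cnj (omega_d d) \<in> \<int>"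
proof (cases "d mod 4 = 3")
  case True
  then have "(4::int) dvd int d + 1" by presburger
  then obtain q where q: "int d + 1 = 4 * q" by blast
  then have "real d + 1 = 4 * of_int q"
    by (metis of_int_add of_int_mult of_int_numeral of_int_of_nat_eq of_int_1)
  then have "omega_d d * cnj (omega_d d) = of_int q"
    using True by (simp add: omega_d_def complex_eq_iff field_simps)
  then show ?thesis by simp
next
  case False
  then have "omega_d d * cnj (omega_d d) = of_nat d" by (simp add: omega_d_def complex_eq_iff)
  then show ?thesis by simp
qed

lemma O_d_memE:
  assumes "x \<in> O_d d"
  obtains m n :: int where "x = of_int m + of_int n * omega_d d"
  using assms unfolding O_d_def by blast

lemma O_d_memI: "of_int m + of_int n * omega_d d \<in> O_d d"
  unfolding O_d_def by blast

lemma O_d_of_int: "of_int m \<in> O_d d"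
  using O_d_memI[of m 0 d] by simp

lemma O_d_add:
  assumes "x \<in> O_d d" and "y \<in> O_d d"
  shows "x + y \<in> O_d d"
proof -
  obtain m n where x: "x = of_int m + of_int n * omega_d d"
    using assms(1) by (rule O_d_memE)
  obtain m' n' where y: "y = of_int m' + of_int n' * omega_d d"
    using assms(2) by (rule O_d_memE)
  have "x + y = of_int (m + m') + of_int (n + n') * omega_d d"
    by (simp add: x y algebra_simps)
  then show ?thesis by (simp only: O_d_memI)
qed

lemma O_d_uminus:
  assumes "x \<in> O_d d"
  shows "- x \<in> O_d d"
proof -
  obtain m n where x: "x = of_int m + of_int n * omega_d d"
    using assms by (rule O_d_memE)
  have "- x = of_int (- m) + of_int (- n) * omega_d d"
    by (simp add: x algebra_simps)
  then show ?thesis by (simp only: O_d_memI)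
qed

lemma O_d_cnj:
  assumes "x \<in> O_d d"
  shows "cnj x \<in> O_d d"
proof -
  obtain t where t: "omega_d d + cnj (omega_d d) = of_int t"
    using omega_d_trace_Ints Ints_cases by metis
  obtain m n where x: "x = of_int m + of_int n * omega_d d"
    using assms by (rule O_d_memE)
  have "cnj x = of_int m + of_int n * (omega_d d + cnj (omega_d d)) - of_int n * omega_d d"
    by (simp add: x algebra_simps)
  also have "\<dots> = of_int (m + n * t) + of_int (- n) * omega_d d"
    unfolding t by (simp add: algebra_simps)
  finally have "cnj x = of_int (m + n * t) + of_int (- n) * omega_d d" .
  then show ?thesis by (simp only: O_d_memI)
qed

lemma O_d_mult:
  assumes "x \<in> O_d d" and "y \<in> O_d d"
  shows "x * y \<in> O_d d"
proof -
  obtain t where t: "omega_d d + cnj (omega_d d) = of_int t"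
    using omega_d_trace_Ints Ints_cases by metis
  obtain N where N: "omega_d d * cnj (omega_d d) = of_int N"
    using omega_d_norm_Ints Ints_cases by metis
  have omega_sq: "omega_d d * omega_d d = of_int t * omega_d d - of_int N"
    by (simp flip: t N add: algebra_simps)
  obtain m n where x: "x = of_int m + of_int n * omega_d d"
    using assms(1) by (rule O_d_memE)
  obtain m' n' where y: "y = of_int m' + of_int n' * omega_d d"
    using assms(2) by (rule O_d_memE)
  have "x * y = of_int m * of_int m' + (of_int m * of_int n' + of_int n * of_int m') * omega_d d
      + of_int n * of_int n' * (omega_d d * omega_d d)"
    by (simp add: x y algebra_simps)
  also have "\<dots> = of_int (m * m' - n * n' * N) + of_int (m * n' + n * m' + n * n' * t) * omega_d d"
    unfolding omega_sq by (simp add: algebra_simps)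
  finally show ?thesis by (simp only: O_d_memI)
qed

lemma O_d_trace_Ints:
  assumes "x \<in> O_d d"
  shows "x + cnj x \<in> \<int>"
proof -
  obtain m n where x: "x = of_int m + of_int n * omega_d d"
    using assms by (rule O_d_memE)
  have "x + cnj x = 2 * of_int m + of_int n * (omega_d d + cnj (omega_d d))"
    by (simp add: x algebra_simps)
  then show ?thesis using omega_d_trace_Ints by simp
qed

lemma O_d_norm_Ints:
  assumes "x \<in> O_d d"
  shows "x * cnj x \<in> \<int>"
proof -
  obtain m n where x: "x = of_int m + of_int n * omega_d d"
    using assms by (rule O_d_memE)
  have "x * cnj x = of_int m * of_int m + of_int m * of_int n * (omega_d d + cnj (omega_d d))
      + of_int n * of_int n * (omega_d d * cnj (omega_d d))"
    by (simp add: x algebra_simps)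
  then show ?thesis using omega_d_trace_Ints omega_d_norm_Ints by simp
qed

lemma units_O_d_norm:
  assumes "u \<in> units_O_d d"
  shows "u * cnj u = 1"
proof -
  obtain v where u: "u \<in> O_d d" and v: "v \<in> O_d d" and uv: "u * v = 1"
    using assms unfolding units_O_d_def by blast
  obtain A where A: "u * cnj u = of_int A"
    using O_d_norm_Ints[OF u] Ints_cases by metis
  obtain B where B: "v * cnj v = of_int B"
    using O_d_norm_Ints[OF v] Ints_cases by metis
  have "of_int (A * B) = (u * v) * cnj (u * v)"
    by (simp add: A [symmetric] B [symmetric] ac_simps)
  then have "(of_int (A * B) :: complex) = 1" using uv by simp
  then have "A * B = 1" by (simp only: of_int_eq_1_iff)
  moreover have "complex_of_real (of_int A) = complex_of_real ((cmod u)\<^sup>2)"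
    by (simp only: complex_norm_square A of_real_of_int_eq)
  then have "real_of_int A = (cmod u)\<^sup>2" by (simp only: of_real_eq_iff)
  then have "0 \<le> real_of_int A" by simp
  then have "A \<ge> 0" by simp
  ultimately have "A = 1" using zmult_eq_1_iff by auto
  then show ?thesis using A by simp
qed

definition herm_form :: "int \<times> complex \<times> int \<Rightarrow> complex \<Rightarrow> complex" where
  "herm_form t z = (case t of (a, b, c) \<Rightarrow> of_int a * (z * cnj z) + b * z + cnj b * cnj z + of_int c)"

lemma H_term_herm_form: "H_term k z t = max 0 (Re (herm_form t z) ^ k)"
  by (cases t) (simp only: H_term_def herm_form_def complex_norm_square prod.case)

lemma H_reindex:
  assumes "bij_betw g (H_index d \<Delta>) (H_index d \<Delta>)"
    and "\<And>t. t \<in> H_index d \<Delta> \<Longrightarrow> herm_form (g t) z = herm_form t w"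
  shows "H d k \<Delta> w = H d k \<Delta> z"
proof -
  have "H d k \<Delta> z = (\<Sum>\<^sub>\<infinity>t \<in> H_index d \<Delta>. H_term k z (g t))"
    unfolding H_def by (rule infsum_reindex_bij_betw [OF assms(1), symmetric])
  also have "\<dots> = H d k \<Delta> w"
    unfolding H_def by (rule infsum_cong) (simp add: H_term_herm_form assms(2))
  finally show ?thesis by simp
qed

fun cnj_triple :: "int \<times> complex \<times> int \<Rightarrow> int \<times> complex \<times> int" where
  "cnj_triple (a, b, c) = (a, cnj b, c)"

lemma herm_form_cnj_triple: "herm_form (cnj_triple t) z = herm_form t (cnj z)"
  by (cases t) (simp add: herm_form_def algebra_simps)

lemma cnj_triple_in_H_index: "t \<in> H_index d \<Delta> \<Longrightarrow> cnj_triple t \<in> H_index d \<Delta>"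
  by (cases t) (auto simp: H_index_def O_d_cnj mult.commute)

lemma bij_cnj_triple: "bij_betw cnj_triple (H_index d \<Delta>) (H_index d \<Delta>)"
proof (rule bij_betwI [where g = cnj_triple])
  show "cnj_triple (cnj_triple t) = t" for t
    by (cases t) simp
qed (auto intro: cnj_triple_in_H_index)

fun scale_triple :: "complex \<Rightarrow> int \<times> complex \<times> int \<Rightarrow> int \<times> complex \<times> int" where
  "scale_triple u (a, b, c) = (a, b * u, c)"

lemma herm_form_scale_triple:
  assumes "u * cnj u = 1"
  shows "herm_form (scale_triple u t) z = herm_form t (u * z)"
proof (cases t)
  case (fields a b c)
  have "u * z * cnj (u * z) = z * cnj z"
    using assms by (simp add: ac_simps)
  then show ?thesis
    by (simp add: fields herm_form_def ac_simps)
qed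

lemma scale_triple_in_H_index:
  assumes "u \<in> O_d d" and "u * cnj u = 1" and "t \<in> H_index d \<Delta>"
  shows "scale_triple u t \<in> H_index d \<Delta>"
proof (cases t)
  case (fields a b c)
  have "b * u * (cnj b * cnj u) = b * cnj b * (u * cnj u)"
    by (simp add: ac_simps)
  also have "\<dots> = b * cnj b"
    using assms(2) by simp
  finally have norm_bu: "b * u * (cnj b * cnj u) = b * cnj b" .
  show ?thesis
    using assms(1,3) by (simp add: fields H_index_def O_d_mult norm_bu)
qed

lemma scale_triple_cnj:
  assumes "u * cnj u = 1"
  shows "scale_triple (cnj u) (scale_triple u t) = t"
  using assms by (cases t) (simp add: mult.assoc)

lemma bij_scale_triple:
  assumes "u \<in> units_O_d d"
  shows "bij_betw (scale_triple u) (H_index d \<Delta>) (H_index d \<Delta>)"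
proof -
  have u: "u \<in> O_d d" and norm_u: "u * cnj u = 1"
    using assms units_O_d_norm unfolding units_O_d_def by auto
  have norm_cnj_u: "cnj u * cnj (cnj u) = 1"
    using norm_u by (simp add: mult.commute)
  show ?thesis
  proof (rule bij_betwI [where g = "scale_triple (cnj u)"])
    show "scale_triple u (scale_triple (cnj u) t) = t" for t
      using scale_triple_cnj [OF norm_cnj_u] by simp
  qed (auto intro: scale_triple_in_H_index scale_triple_cnj u O_d_cnj norm_u norm_cnj_u)
qed

lemma of_int_floor_Re_Ints: "x \<in> \<int> \<Longrightarrow> of_int \<lfloor>Re x\<rfloor> = x"
  by (elim Ints_cases) simp

lemma herm_form_Ints:
  assumes "b \<in> O_d d" and "z \<in> O_d d"
  shows "herm_form (a, b, c) z \<in> \<int>"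
proof -
  have "herm_form (a, b, c) z = of_int a * (z * cnj z) + (b * z + cnj (b * z)) + of_int c"
    by (simp add: herm_form_def algebra_simps)
  also have "\<dots> \<in> \<int>"
    using assms by (intro Ints_add Ints_mult Ints_of_int O_d_norm_Ints O_d_trace_Ints O_d_mult)
  finally show ?thesis .
qed

text \<open>The constant coefficient of the translated form is its value at l; that value is an integer
  (\<open>herm_form_Ints\<close>), and \<open>\<lfloor>Re _\<rfloor>\<close> only converts it to type int.\<close>
definition shift_triple :: "complex \<Rightarrow> int \<times> complex \<times> int \<Rightarrow> int \<times> complex \<times> int" where
  "shift_triple l t = (case t of (a, b, c) \<Rightarrow> (a, b + of_int a * cnj l, \<lfloor>Re (herm_form t l)\<rfloor>))"

lemma shift_tripleE:
  assumes "t = (a, b, c)" and "herm_form t l \<in> \<int>"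
  obtains c' where "shift_triple l t = (a, b + of_int a * cnj l, c')" and "of_int c' = herm_form t l"
proof (rule that)
  show "shift_triple l t = (a, b + of_int a * cnj l, \<lfloor>Re (herm_form t l)\<rfloor>)"
    using assms(1) by (simp add: shift_triple_def)
  show "of_int \<lfloor>Re (herm_form t l)\<rfloor> = herm_form t l"
    using assms(2) by (rule of_int_floor_Re_Ints)
qed

lemma herm_form_shift_triple:
  assumes "herm_form t l \<in> \<int>"
  shows "herm_form (shift_triple l t) z = herm_form t (z + l)"
proof -
  obtain a b c where t: "t = (a, b, c)"
    by (cases t)
  obtain c' where shift: "shift_triple l t = (a, b + of_int a * cnj l, c')"
    and c': "of_int c' = herm_form t l"
    using t assms by (rule shift_tripleE)
  show ?thesis
    unfolding shift by (simp add: c' t herm_form_def algebra_simps)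
qed

lemma shift_triple_in_H_index:
  assumes "l \<in> O_d d" and "t \<in> H_index d \<Delta>"
  shows "shift_triple l t \<in> H_index d \<Delta>"
proof -
  obtain a b c where t: "t = (a, b, c)"
    by (cases t)
  have b: "b \<in> O_d d"
    using assms(2) by (simp add: t H_index_def)
  obtain c' where shift: "shift_triple l t = (a, b + of_int a * cnj l, c')"
    and c': "of_int c' = herm_form t l"
    using t herm_form_Ints [OF b assms(1), of a c, folded t] by (rule shift_tripleE)
  have "(b + of_int a * cnj l) * cnj (b + of_int a * cnj l) - of_int (a * c')
      = b * cnj b - of_int (a * c)"
    by (simp add: c' t herm_form_def algebra_simps)
  then show ?thesis
    using assms b unfolding shift by (simp add: t H_index_def O_d_add O_d_mult O_d_of_int O_d_cnj)
qed

lemma shift_triple_uminus: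
  assumes "l \<in> O_d d" and "t \<in> H_index d \<Delta>"
  shows "shift_triple (- l) (shift_triple l t) = t"
proof -
  obtain a b c where t: "t = (a, b, c)"
    by (cases t)
  have b: "b \<in> O_d d"
    using assms(2) by (simp add: t H_index_def)
  have Ints: "herm_form t l \<in> \<int>"
    unfolding t using b assms(1) by (rule herm_form_Ints)
  obtain c' where shift: "shift_triple l t = (a, b + of_int a * cnj l, c')"
    and "of_int c' = herm_form t l"
    using t Ints by (rule shift_tripleE)
  have "herm_form (shift_triple l t) (- l) = of_int c"
    unfolding herm_form_shift_triple [OF Ints] by (simp add: t herm_form_def)
  then have "\<lfloor>Re (herm_form (a, b + of_int a * cnj l, c') (- l))\<rfloor> = c"
    by (simp add: shift)
  then show ?thesis
    unfolding shift by (simp add: shift_triple_def t)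
qed

lemma bij_shift_triple:
  assumes "l \<in> O_d d"
  shows "bij_betw (shift_triple l) (H_index d \<Delta>) (H_index d \<Delta>)"
proof (rule bij_betwI [where g = "shift_triple (- l)"])
  show "shift_triple l (shift_triple (- l) t) = t" if "t \<in> H_index d \<Delta>" for t
    using shift_triple_uminus [OF O_d_uminus [OF assms] that] by simp
qed (auto intro: shift_triple_in_H_index shift_triple_uminus assms O_d_uminus)

theorem proposition2p3:
  fixes d k :: nat and \<Delta> :: int
  assumes "d \<in> {1, 2, 3, 7, 11}"
    and "\<Delta> > 0"
    and "\<not> (\<exists>\<beta> \<in> O_d d. \<beta> * cnj \<beta> = of_int \<Delta>)"
    and "k \<ge> 1" and "odd k"
  shows "\<forall>z. H d k \<Delta> (cnj z) = H d k \<Delta> z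
       \<and> (\<forall>u \<in> units_O_d d. H d k \<Delta> (u * z) = H d k \<Delta> z)
       \<and> (\<forall>l \<in> O_d d. H d k \<Delta> (z + l) = H d k \<Delta> z)"
proof (intro allI conjI ballI)
  fix z
  show "H d k \<Delta> (cnj z) = H d k \<Delta> z"
    using bij_cnj_triple by (rule H_reindex) (rule herm_form_cnj_triple)
  show "H d k \<Delta> (u * z) = H d k \<Delta> z" if "u \<in> units_O_d d" for u
    using bij_scale_triple [OF that] by (rule H_reindex)
      (rule herm_form_scale_triple [OF units_O_d_norm [OF that]])
  show "H d k \<Delta> (z + l) = H d k \<Delta> z" if "l \<in> O_d d" for l
    using bij_shift_triple [OF that] by (rule H_reindex)
      (auto intro: herm_form_shift_triple herm_form_Ints that simp: H_index_def)
qed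

end
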